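(* Let $n>1$ be an integer and $S=S_1\cup S_2\subseteq U_{6n}$ with $S_1=\{a^{2r}b,\ a^{2r}b^2\mid 1\le r\le n-1\}$ and $S_2=\{a^{2r+1}b\mid 0\le r\le n-1\}$. Then $\mathrm{Cay}(U_{6n},S)$ is a connected integral graph whose spectrum (eigenvalues with multiplicities) is $\{[1-2n]^2,[-2]^{2n-2},[1]^{4n-2},[n-2]^1,[3n-2]^1\}$.
   Context: For an integer $n\ge1$, $U_{6n}=\langle a,b\mid a^{2n}=b^3=1,\ a^{-1}ba=b^{-1}\rangle$, a group of order $6n$. For a group $G$ and $S\subseteq G$ with $1\notin S=S^{-1}$, the Cayley graph $\mathrm{Cay}(G,S)$ has vertex set $G$ and edges $\{g,sg\}$ for $g\in G,s\in S$. A graph is integral if all eigenvalues of its adjacency matrix are integers. $[\lambda]^m$ denotes eigenvalue $\lambda$ with multiplicity $m$. *)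

theory Defs
  imports "Jordan_Normal_Form.Char_Poly" "HOL-Library.Multiset"
begin

text \<open>The group U_{6n} = <a,b | a^(2n) = b^3 = 1, a^-1 b a = b^-1>.
  Every element has a unique normal form a^i b^j with 0 <= i < 2n, 0 <= j < 3,
  represented by the pair (i,j). From b a = a b^-1 we get b^j a^k = a^k b^((-1)^k j), so
  (a^i b^j)(a^k b^l) = a^(i+k) b^((-1)^k j + l).\<close>

definition U_carrier :: "nat \<Rightarrow> (nat \<times> nat) set" where
  "U_carrier n = {0..<2*n} \<times> {0..<3}"

fun U_mul :: "nat \<Rightarrow> nat \<times> nat \<Rightarrow> nat \<times> nat \<Rightarrow> nat \<times> nat" where
  "U_mul n (i, j) (k, l) = ((i + k) mod (2*n), ((if even k then j else 2*j) + l) mod 3)"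

definition U_one :: "nat \<times> nat" where "U_one = (0, 0)"

definition U_pow :: "nat \<Rightarrow> nat \<times> nat \<Rightarrow> nat \<Rightarrow> nat \<times> nat" where
  "U_pow n x k = ((U_mul n x) ^^ k) U_one"

definition U_a :: "nat \<times> nat" where "U_a = (1, 0)"
definition U_b :: "nat \<times> nat" where "U_b = (0, 1)"

definition cay_adj :: "('g \<Rightarrow> 'g \<Rightarrow> 'g) \<Rightarrow> 'g set \<Rightarrow> 'g \<Rightarrow> 'g \<Rightarrow> bool" where
  "cay_adj mul S g h \<longleftrightarrow> (\<exists>s\<in>S. h = mul s g \<or> g = mul s h)"

definition cay_connected :: "('g \<Rightarrow> 'g \<Rightarrow> 'g) \<Rightarrow> 'g set \<Rightarrow> 'g set \<Rightarrow> bool" where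
  "cay_connected mul G S \<longleftrightarrow>
     (\<forall>g\<in>G. \<forall>h\<in>G. (\<lambda>x y. x \<in> G \<and> y \<in> G \<and> cay_adj mul S x y)\<^sup>*\<^sup>* g h)"

definition U_elem :: "nat \<Rightarrow> nat \<times> nat" where
  "U_elem p = (p div 3, p mod 3)"

definition U_cay_adj_mat :: "nat \<Rightarrow> (nat \<times> nat) set \<Rightarrow> complex mat" where
  "U_cay_adj_mat n S = mat (6*n) (6*n)
     (\<lambda>(p, q). if cay_adj (U_mul n) S (U_elem p) (U_elem q) then 1 else 0)"

definition integral_mat :: "complex mat \<Rightarrow> bool" where
  "integral_mat A \<longleftrightarrow> (\<forall>k. eigenvalue A k \<longrightarrow> k \<in> \<int>)"

definition has_spectrum :: "complex mat \<Rightarrow> int multiset \<Rightarrow> bool" where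
  "has_spectrum A M \<longleftrightarrow> char_poly A = (\<Prod>x\<in>#M. [:- of_int x, 1:])"

end

theory Submission
  imports Defs
begin

text \<open>Number the vertex \<open>a^(2m + e) b^j\<close> (\<open>e < 2\<close>, \<open>j < 3\<close>) as \<open>6m + 3e + j\<close>. Then the
  adjacency matrix is \<open>(J - I) \<otimes> X + J \<otimes> Y\<close> with \<open>J, I\<close> of size \<open>n\<close>, where the 6 \<times> 6
  matrix \<open>X\<close> joins equal parities \<open>e\<close> with different \<open>j\<close>, and \<open>Y\<close> is the perfect matching
  between the two parities (\<open>b^j \<leftrightarrow> a b^(j+1)\<close>). Let \<open>u_0, \<dots>, u_(n-1)\<close> be the Helmert basis
  of \<open>\<complex>^n\<close>: \<open>u_0 = (1, \<dots>, 1)\<close> and \<open>J u_t = 0\<close> for \<open>t > 0\<close>. The vectors \<open>u_t \<otimes> h\<close>, with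
  \<open>h\<close> an eigenvector of \<open>(n - 1) X + n Y\<close> for \<open>t = 0\<close> and of \<open>- X\<close> for \<open>t > 0\<close>, form an
  orthogonal eigenbasis; so the adjacency matrix is similar to an integer diagonal matrix, whose
  entries are \<open>3n - 2, n - 2, 1, 1, 1 - 2n, 1 - 2n\<close> and \<open>n - 1\<close> times \<open>-2, -2, 1, 1, 1, 1\<close>.
  Connectivity: every vertex is joined to the identity by a path of length at most 4.\<close>

lemma index_mult_mat_sum:
  assumes "A \<in> carrier_mat N N" "B \<in> carrier_mat N N" "i < N" "j < N"
  shows "(A * B) $$ (i, j) = (\<Sum>q<N. A $$ (i, q) * B $$ (q, j))"
  using assms by (simp add: scalar_prod_def atLeast0LessThan)

lemma similar_mat_of_eigenbasis:
  fixes A :: "'a::field mat"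
  assumes carrier: "A \<in> carrier_mat N N" "P \<in> carrier_mat N N" "Q \<in> carrier_mat N N"
      "D \<in> carrier_mat N N"
    and eigen: "A * P = P * D" and inverse: "Q * P = 1\<^sub>m N"
  shows "similar_mat A D"
proof -
  have PQ: "P * Q = 1\<^sub>m N" by (rule mat_mult_left_right_inverse[OF carrier(3,2) inverse])
  have "A = A * (P * Q)" using PQ carrier(1) by simp
  also have "\<dots> = P * D * Q" using eigen by (simp add: assoc_mult_mat[symmetric, OF carrier(1-3)])
  finally show ?thesis using similar_matI[of A D P Q N] carrier PQ inverse by simp
qed

lemma has_spectrum_similar: "similar_mat A B \<Longrightarrow> has_spectrum B M \<Longrightarrow> has_spectrum A M"
  unfolding has_spectrum_def by (simp add: char_poly_similar)

lemma has_spectrum_mat_diag: "has_spectrum (mat_diag N (\<lambda>c. of_int (f c))) (\<Sum>c<N. {#f c#})"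
proof -
  let ?D = "mat_diag N (\<lambda>c. of_int (f c)) :: complex mat"
  have "char_poly ?D = (\<Prod>a\<leftarrow>diag_mat ?D. [:- a, 1:])"
    by (rule char_poly_upper_triangular[of ?D N]) (auto simp: upper_triangular_def mat_diag_def)
  also have "diag_mat ?D = map (\<lambda>c. of_int (f c)) [0..<N]"
    by (simp add: diag_mat_def mat_diag_def)
  also have "(\<Prod>a\<leftarrow>map (\<lambda>c. of_int (f c)) [0..<N]. [:- a, 1:])
      = (\<Prod>x\<in>#(\<Sum>c<N. {#f c#}). [:- of_int x, 1:])"
    by (induction N) auto
  finally show ?thesis unfolding has_spectrum_def .
qed

lemma integral_mat_of_has_spectrum:
  assumes "A \<in> carrier_mat N N" "has_spectrum A M"
  shows "integral_mat A"
  unfolding integral_mat_def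
proof (intro allI impI)
  fix k assume "eigenvalue A k"
  then have "poly (\<Prod>x\<in>#M. [:- of_int x, 1:]) k = 0"
    using eigenvalue_root_char_poly[OF assms(1)] assms(2) by (simp add: has_spectrum_def)
  then obtain x where "k = of_int x"
    by (induction M) auto
  then show "k \<in> \<int>" by simp
qed

lemma sum_blocks:
  fixes f :: "nat \<Rightarrow> 'a::comm_monoid_add"
  shows "(\<Sum>q<b*n. f q) = (\<Sum>m<n. \<Sum>r<b. f (b*m + r))"
proof -
  have block: "sum f {m*b..<m*b+b} = (\<Sum>r<b. f (b*m + r))" for m
    using sum.shift_bounds_nat_ivl[of f 0 "m*b" b] by (simp add: atLeast0LessThan add.commute mult.commute)
  have "(\<Sum>q<b*n. f q) = (\<Sum>m<n. sum f {m*b..<m*b+b})"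
    using sum.nat_group[of f b n] by (simp add: mult.commute)
  then show ?thesis by (simp add: block)
qed

lemma sum_six: "(\<Sum>r<6::nat. f r) = f 0 + f 1 + f 2 + f 3 + f 4 + f 5"
  by (simp add: numeral_eq_Suc ac_simps)

section \<open>The Helmert basis\<close>

definition helmert :: "nat \<Rightarrow> nat \<Rightarrow> complex" where
  "helmert t m = (if t = 0 \<or> m < t then 1 else if m = t then - of_nat t else 0)"

definition helmert_sqnorm :: "nat \<Rightarrow> nat \<Rightarrow> complex" where
  "helmert_sqnorm n t = of_nat (if t = 0 then n else t + t*t)"

lemma sum_helmert_eq:
  assumes "0 < t" "t < n" "\<And>m. m < t \<Longrightarrow> f m = 1"
  shows "(\<Sum>m<n. helmert t m * f m) = of_nat t - of_nat t * f t"
proof -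
  have "(\<Sum>m<n. helmert t m * f m) = (\<Sum>m<Suc t. helmert t m * f m)"
    by (rule sum.mono_neutral_right) (use assms in \<open>auto simp: helmert_def\<close>)
  also have "\<dots> = (\<Sum>m<t. 1) - of_nat t * f t"
    using assms by (simp add: helmert_def)
  finally show ?thesis by simp
qed

lemma sum_helmert: "t < n \<Longrightarrow> (\<Sum>m<n. helmert t m) = (if t = 0 then of_nat n else 0)"
  using sum_helmert_eq[of t n "\<lambda>_. 1"] by (simp add: helmert_def)

lemma helmert_orth:
  assumes "t < n" "t' < n"
  shows "(\<Sum>m<n. helmert t m * helmert t' m) = (if t = t' then helmert_sqnorm n t else 0)"
proof -
  have le: "(\<Sum>m<n. helmert t m * helmert t' m) = (if t = t' then helmert_sqnorm n t else 0)"
    if "t \<le> t'" "t' < n" for t t'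
  proof (cases "t = 0")
    case True
    then show ?thesis using sum_helmert[OF that(2)] by (simp add: helmert_def helmert_sqnorm_def)
  next
    case False
    then show ?thesis
      using sum_helmert_eq[of t n "helmert t'"] that
      by (cases "t = t'") (auto simp: helmert_def helmert_sqnorm_def)
  qed
  show ?thesis
    using le[of t t'] le[of t' t] assms by (cases "t \<le> t'") (auto simp: mult.commute)
qed

section \<open>The connection set\<close>

lemma U_pow_a: "U_pow n U_a k = (k mod (2*n), 0)"
proof (induction k)
  case 0
  then show ?case by (simp add: U_pow_def U_one_def)
next
  case (Suc k)
  have "U_pow n U_a (Suc k) = U_mul n U_a (U_pow n U_a k)" by (simp add: U_pow_def)
  also have "\<dots> = (Suc k mod (2*n), 0)" using Suc by (simp add: U_a_def mod_Suc_eq)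
  finally show ?case .
qed

lemma U_pow_b_2: "U_pow n U_b 2 = (0, 2)"
  by (simp add: U_pow_def U_one_def U_b_def numeral_2_eq_2)

definition U_conn :: "nat \<Rightarrow> (nat \<times> nat) set" where
  "U_conn n = {(i, j). i < 2*n \<and> j < 3 \<and> (even i \<and> i \<noteq> 0 \<and> j \<noteq> 0 \<or> odd i \<and> j = 1)}"

lemma U_conn_eq:
  assumes "n > 1"
  shows "{U_mul n (U_pow n U_a (2*r)) U_b | r. 1 \<le> r \<and> r \<le> n - 1}
       \<union> {U_mul n (U_pow n U_a (2*r)) (U_pow n U_b 2) | r. 1 \<le> r \<and> r \<le> n - 1}
       \<union> {U_mul n (U_pow n U_a (2*r+1)) U_b | r. r \<le> n - 1} = U_conn n"
proof -
  have "{U_mul n (U_pow n U_a (2*r)) U_b | r. 1 \<le> r \<and> r \<le> n - 1}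
      = {(2*r, 1) | r. 1 \<le> r \<and> r \<le> n - 1}"
    using assms by (force simp: U_pow_a U_b_def)
  moreover have "{U_mul n (U_pow n U_a (2*r)) (U_pow n U_b 2) | r. 1 \<le> r \<and> r \<le> n - 1}
      = {(2*r, 2) | r. 1 \<le> r \<and> r \<le> n - 1}"
    using assms by (force simp: U_pow_a U_pow_b_2)
  moreover have "{U_mul n (U_pow n U_a (2*r+1)) U_b | r. r \<le> n - 1}
      = {(2*r+1, 1) | r. r \<le> n - 1}"
    using assms by (force simp: U_pow_a U_b_def)
  moreover have "{(2*r, 1) | r. 1 \<le> r \<and> r \<le> n - 1} \<union> {(2*r, 2) | r. 1 \<le> r \<and> r \<le> n - 1}
      \<union> {(2*r+1, 1) | r. r \<le> n - 1} = U_conn n" (is "?L = _")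
  proof
    show "?L \<subseteq> U_conn n" using assms by (auto simp: U_conn_def)
  next
    show "U_conn n \<subseteq> ?L"
    proof
      fix x assume "x \<in> U_conn n"
      then obtain i j where x: "x = (i, j)" "i < 2*n" "j < 3"
          and ij: "even i \<and> i \<noteq> 0 \<and> j \<noteq> 0 \<or> odd i \<and> j = 1"
        by (auto simp: U_conn_def)
      show "x \<in> ?L"
      proof (cases "even i")
        case True
        then show ?thesis using x ij by (auto elim!: evenE)
      next
        case False
        then show ?thesis using x ij by (auto elim!: oddE)
      qed
    qed
  qed
  ultimately show ?thesis by simp
qed

definition U_conn_adj :: "nat \<Rightarrow> nat \<Rightarrow> nat \<Rightarrow> nat \<Rightarrow> bool" where
  "U_conn_adj i j k l \<longleftrightarrow> (even i = even k \<and> i \<noteq> k \<and> j \<noteq> l)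
     \<or> (even i \<and> odd k \<and> l = (j + 1) mod 3) \<or> (odd i \<and> even k \<and> l = (j + 2) mod 3)"

lemma U_mul_conn_iff:
  assumes "i < 2*n" "k < 2*n" "j < 3" "l < 3"
  shows "(\<exists>s\<in>U_conn n. (k, l) = U_mul n s (i, j)) \<longleftrightarrow> U_conn_adj i j k l"
proof
  assume "\<exists>s\<in>U_conn n. (k, l) = U_mul n s (i, j)"
  then obtain s1 s2 where s: "(s1, s2) \<in> U_conn n" "(k, l) = U_mul n (s1, s2) (i, j)" by auto
  have s1: "s1 < 2*n" "s2 < 3" "even s1 \<and> s1 \<noteq> 0 \<and> s2 \<noteq> 0 \<or> odd s1 \<and> s2 = 1"
    using s(1) by (auto simp: U_conn_def)
  have k: "k = (if s1 + i < 2*n then s1 + i else s1 + i - 2*n)"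
    using s(2) s1(1) assms(1) by (simp add: le_mod_geq)
  have l: "l = ((if even i then s2 else 2*s2) + j) mod 3" using s(2) by simp
  have parity: "even k \<longleftrightarrow> (even s1 \<longleftrightarrow> even i)" using k s1(1) assms(1) by (auto; presburger)
  have "i = k \<longleftrightarrow> s1 = 0" using k s1(1) assms(1) by auto
  moreover have "j = 0 \<or> j = 1 \<or> j = 2" "s2 = 0 \<or> s2 = 1 \<or> s2 = 2" using assms(3) s1(2) by auto
  ultimately show "U_conn_adj i j k l"
    using s1(3) parity l unfolding U_conn_adj_def by (cases "even s1"; cases "even i") auto
next
  assume adj: "U_conn_adj i j k l"
  define s1 where "s1 = (if i \<le> k then k - i else k + 2*n - i)"
  have s1: "s1 < 2*n" "(s1 + i) mod (2*n) = k" "even s1 \<longleftrightarrow> (even i = even k)" "s1 = 0 \<longleftrightarrow> i = k"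
    using assms unfolding s1_def by (auto simp: le_mod_geq; presburger)+
  define s2 where "s2 = (if odd s1 then 1 else if even i then (l + 3 - j) mod 3 else (2*(l + 3 - j)) mod 3)"
  have "j = 0 \<or> j = 1 \<or> j = 2" "l = 0 \<or> l = 1 \<or> l = 2" using assms(3,4) by auto
  then have "(s1, s2) \<in> U_conn n" "(k, l) = U_mul n (s1, s2) (i, j)"
    using adj s1 unfolding s2_def U_conn_adj_def U_conn_def by (auto; presburger)+
  then show "\<exists>s\<in>U_conn n. (k, l) = U_mul n s (i, j)" by blast
qed

lemma U_conn_adj_sym:
  assumes "j < 3" "l < 3"
  shows "U_conn_adj k l i j \<longleftrightarrow> U_conn_adj i j k l"
proof -
  have "j = 0 \<or> j = 1 \<or> j = 2" "l = 0 \<or> l = 1 \<or> l = 2" using assms by auto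
  then show ?thesis unfolding U_conn_adj_def by (elim disjE; simp; blast)
qed

lemma cay_adj_U_conn_iff:
  assumes "i < 2*n" "k < 2*n" "j < 3" "l < 3"
  shows "cay_adj (U_mul n) (U_conn n) (i, j) (k, l) \<longleftrightarrow> U_conn_adj i j k l"
  using U_mul_conn_iff[OF assms] U_mul_conn_iff[OF assms(2,1,4,3)] U_conn_adj_sym[OF assms(3,4)]
  unfolding cay_adj_def by blast

section \<open>The adjacency matrix in block form\<close>

definition U_block_adj :: "nat \<Rightarrow> nat \<Rightarrow> nat \<Rightarrow> nat \<Rightarrow> bool" where
  "U_block_adj m r m' r' \<longleftrightarrow>
     (if r div 3 = r' div 3 then m \<noteq> m' \<and> r \<noteq> r'
      else if r < 3 then r' = 3 + (r + 1) mod 3 else r' = (r + 2) mod 3)"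

lemma U_elem_block: "U_elem (6*m + r) = (2*m + r div 3, r mod 3)"
proof -
  have a: "6*m + r = r + 3*(2*m)" by simp
  have "(6*m + r) div 3 = 2*m + r div 3" unfolding a by simp
  moreover have "(6*m + r) mod 3 = r mod 3" by (subst a, rule mod_mult_self2)
  ultimately show ?thesis unfolding U_elem_def by simp
qed

lemma U_cay_adj_mat_entry:
  assumes "p < 6*n" "q < 6*n"
  shows "U_cay_adj_mat n (U_conn n) $$ (p, q)
       = (if U_block_adj (p div 6) (p mod 6) (q div 6) (q mod 6) then 1 else 0)"
proof -
  have six: "r = 0 \<or> r = 1 \<or> r = 2 \<or> r = 3 \<or> r = 4 \<or> r = 5" if "r < 6" for r :: nat
    using that by auto
  have "p div 6 < n" "q div 6 < n" using assms by auto
  moreover have "p mod 6 div 3 \<le> 1" "q mod 6 div 3 \<le> 1" by simp_all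
  ultimately have ik: "2*(p div 6) + p mod 6 div 3 < 2*n" "2*(q div 6) + q mod 6 div 3 < 2*n"
    by linarith+
  have "U_elem p = (2*(p div 6) + p mod 6 div 3, p mod 6 mod 3)"
       "U_elem q = (2*(q div 6) + q mod 6 div 3, q mod 6 mod 3)"
    using U_elem_block[of "p div 6" "p mod 6"] U_elem_block[of "q div 6" "q mod 6"] by simp_all
  moreover have "U_conn_adj (2*m + r div 3) (r mod 3) (2*m' + r' div 3) (r' mod 3)
      \<longleftrightarrow> U_block_adj m r m' r'" if "r < 6" "r' < 6" for m r m' r'
    using six[OF that(1)] six[OF that(2)] by (elim disjE) (simp_all add: U_conn_adj_def U_block_adj_def)
  ultimately show ?thesis
    using assms cay_adj_U_conn_iff[OF ik] by (simp add: U_cay_adj_mat_def)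
qed

text \<open>The rows \<open>k < 6\<close> are eigenvectors, with eigenvalue \<open>local_eig n z k\<close>, of
  \<open>(n - 1) X + n Y\<close> if \<open>z\<close> and of \<open>- X\<close> otherwise.\<close>

definition local_vec :: "bool \<Rightarrow> nat \<Rightarrow> nat \<Rightarrow> complex" where
  "local_vec z k r = (if z then
     [[1,1,1,1,1,1],[1,1,1,-1,-1,-1],[1,-1,0,0,1,-1],[1,1,-2,-2,1,1],[1,-1,0,0,-1,1],[1,1,-2,2,-1,-1]] ! k ! r
   else [[1,1,1,0,0,0],[0,0,0,1,1,1],[1,-1,0,0,0,0],[1,1,-2,0,0,0],[0,0,0,1,-1,0],[0,0,0,1,1,-2]] ! k ! r)"

definition local_eig :: "nat \<Rightarrow> bool \<Rightarrow> nat \<Rightarrow> int" where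
  "local_eig n z k = (if z then [3 * int n - 2, int n - 2, 1, 1, 1 - 2 * int n, 1 - 2 * int n] ! k
     else [-2, -2, 1, 1, 1, 1] ! k)"

definition local_sqnorm :: "bool \<Rightarrow> nat \<Rightarrow> complex" where
  "local_sqnorm z k = (if z then [6,6,4,12,4,12] ! k else [3,3,2,6,2,6] ! k)"

lemma local_vec_orth:
  assumes "k < 6" "k' < 6"
  shows "(\<Sum>r<6. local_vec z k r * local_vec z k' r) = (if k = k' then local_sqnorm z k else 0)"
proof -
  have "k = 0 \<or> k = 1 \<or> k = 2 \<or> k = 3 \<or> k = 4 \<or> k = 5"
       "k' = 0 \<or> k' = 1 \<or> k' = 2 \<or> k' = 3 \<or> k' = 4 \<or> k' = 5"
    using assms by auto
  then show ?thesis
    by (cases z; elim disjE) (simp_all add: sum_six local_vec_def local_sqnorm_def)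
qed

lemma sum_U_block_adj_helmert:
  assumes "m < n" "t < n"
  shows "(\<Sum>m'<n. (if U_block_adj m r m' r' then 1 else 0) * helmert t m')
    = (if r div 3 = r' div 3 then (if r \<noteq> r' then (if t = 0 then of_nat n else 0) - helmert t m else 0)
       else if (if r < 3 then r' = 3 + (r + 1) mod 3 else r' = (r + 2) mod 3)
       then (if t = 0 then of_nat n else 0) else 0)"
proof (cases "r div 3 = r' div 3 \<and> r \<noteq> r'")
  case True
  then have "(\<Sum>m'<n. (if U_block_adj m r m' r' then 1 else 0) * helmert t m')
      = (\<Sum>m'<n. helmert t m' - (if m' = m then helmert t m' else 0))"
    by (intro sum.cong) (auto simp: U_block_adj_def)
  also have "\<dots> = (\<Sum>m'<n. helmert t m') - helmert t m"
    using assms(1) by (simp add: sum_subtractf)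
  finally show ?thesis using True sum_helmert[OF assms(2)] by simp
next
  case False
  then show ?thesis using sum_helmert[OF assms(2)] by (auto simp: U_block_adj_def)
qed

lemma U_block_adj_eigen:
  assumes "m < n" "r < 6" "t < n" "k < 6"
  shows "(\<Sum>m'<n. \<Sum>r'<6. (if U_block_adj m r m' r' then 1 else 0) * (helmert t m' * local_vec (t = 0) k r'))
    = of_int (local_eig n (t = 0) k) * (helmert t m * local_vec (t = 0) k r)"
proof -
  have "(\<Sum>m'<n. \<Sum>r'<6. (if U_block_adj m r m' r' then 1 else 0) * (helmert t m' * local_vec (t = 0) k r'))
    = (\<Sum>r'<6. (\<Sum>m'<n. (if U_block_adj m r m' r' then 1 else 0) * helmert t m') * local_vec (t = 0) k r')"
    by (subst sum.swap) (simp add: sum_distrib_right mult.assoc)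
  also have "\<dots> = of_int (local_eig n (t = 0) k) * (helmert t m * local_vec (t = 0) k r)"
  proof -
    have r: "r = 0 \<or> r = 1 \<or> r = 2 \<or> r = 3 \<or> r = 4 \<or> r = 5"
      and k: "k = 0 \<or> k = 1 \<or> k = 2 \<or> k = 3 \<or> k = 4 \<or> k = 5"
      using assms(2,4) by auto
    show ?thesis
    proof (cases "t = 0")
      case True
      with r k show ?thesis
        unfolding sum_U_block_adj_helmert[OF assms(1,3)] sum_six
        by (elim disjE) (simp_all add: local_vec_def local_eig_def helmert_def algebra_simps)
    next
      case False
      with r k show ?thesis
        unfolding sum_U_block_adj_helmert[OF assms(1,3)] sum_six
        by (elim disjE) (simp_all add: local_vec_def local_eig_def algebra_simps)
    qed
  qed
  finally show ?thesis .
qed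

section \<open>An explicit eigenbasis\<close>

definition eigvec_mat :: "nat \<Rightarrow> complex mat" where
  "eigvec_mat n = mat (6*n) (6*n)
     (\<lambda>(p, c). helmert (c div 6) (p div 6) * local_vec (c div 6 = 0) (c mod 6) (p mod 6))"

definition eigvec_mat_inv :: "nat \<Rightarrow> complex mat" where
  "eigvec_mat_inv n = mat (6*n) (6*n)
     (\<lambda>(c, p). helmert (c div 6) (p div 6) * local_vec (c div 6 = 0) (c mod 6) (p mod 6)
        / (helmert_sqnorm n (c div 6) * local_sqnorm (c div 6 = 0) (c mod 6)))"

definition eigval :: "nat \<Rightarrow> nat \<Rightarrow> int" where
  "eigval n c = local_eig n (c div 6 = 0) (c mod 6)"

definition eigval_mat :: "nat \<Rightarrow> complex mat" where
  "eigval_mat n = mat_diag (6*n) (\<lambda>c. of_int (eigval n c))"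

lemma eigvec_mat_carrier [simp]:
  "eigvec_mat n \<in> carrier_mat (6*n) (6*n)" "eigvec_mat_inv n \<in> carrier_mat (6*n) (6*n)"
  "eigval_mat n \<in> carrier_mat (6*n) (6*n)" "U_cay_adj_mat n S \<in> carrier_mat (6*n) (6*n)"
  by (auto simp: eigvec_mat_def eigvec_mat_inv_def eigval_mat_def U_cay_adj_mat_def)

lemma block_index [simp]: "r < 6 \<Longrightarrow> (6*m + r) div 6 = (m::nat)" "r < 6 \<Longrightarrow> (6*m + r) mod 6 = r"
  by auto

lemma eigvec_mat_inv_mult:
  assumes "n > 0"
  shows "eigvec_mat_inv n * eigvec_mat n = 1\<^sub>m (6*n)"
proof (rule eq_matI)
  fix c c' assume "c < dim_row (1\<^sub>m (6*n))" "c' < dim_col (1\<^sub>m (6*n))"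
  then have c: "c < 6*n" "c' < 6*n" by auto
  define t k t' k' where "t = c div 6" "k = c mod 6" "t' = c' div 6" "k' = c' mod 6"
  have tk: "t < n" "k < 6" "t' < n" "k' < 6" using c unfolding t_k_t'_k'_def by auto
  define N where "N = helmert_sqnorm n t * local_sqnorm (t = 0) k"
  have "helmert_sqnorm n t \<noteq> 0"
    using assms unfolding helmert_sqnorm_def by (simp only: of_nat_eq_0_iff) simp
  moreover have "local_sqnorm (t = 0) k \<noteq> 0"
    using tk(2) by (auto simp: local_sqnorm_def less_Suc_eq numeral_eq_Suc)
  ultimately have "N \<noteq> 0" by (simp add: N_def)
  have "(eigvec_mat_inv n * eigvec_mat n) $$ (c, c')
      = (\<Sum>m<n. \<Sum>r<6. eigvec_mat_inv n $$ (c, 6*m + r) * eigvec_mat n $$ (6*m + r, c'))"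
    using index_mult_mat_sum[OF eigvec_mat_carrier(2,1) c] sum_blocks[of _ 6 n] by simp
  also have "\<dots> = (\<Sum>m<n. \<Sum>r<6. helmert t m * helmert t' m * (local_vec (t = 0) k r * local_vec (t' = 0) k' r) / N)"
  proof (intro sum.cong refl)
    fix m r assume "m \<in> {..<n}" "r \<in> {..<6::nat}"
    then have "6*m + r < 6*n" "r < 6" by auto
    then show "eigvec_mat_inv n $$ (c, 6*m + r) * eigvec_mat n $$ (6*m + r, c')
        = helmert t m * helmert t' m * (local_vec (t = 0) k r * local_vec (t' = 0) k' r) / N"
      using c by (simp add: eigvec_mat_inv_def eigvec_mat_def t_k_t'_k'_def N_def)
  qed
  also have "\<dots> = (\<Sum>m<n. helmert t m * helmert t' m) * (\<Sum>r<6. local_vec (t = 0) k r * local_vec (t' = 0) k' r) / N"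
    by (simp add: sum_product sum_divide_distrib)
  also have "\<dots> = 1\<^sub>m (6*n) $$ (c, c')"
  proof -
    have "c = c' \<longleftrightarrow> t = t' \<and> k = k'"
      unfolding t_k_t'_k'_def by (metis div_mult_mod_eq)
    then show ?thesis
      using helmert_orth[OF tk(1,3)] local_vec_orth[OF tk(2,4)] c \<open>N \<noteq> 0\<close>
      by (auto simp: N_def)
  qed
  finally show "(eigvec_mat_inv n * eigvec_mat n) $$ (c, c') = 1\<^sub>m (6*n) $$ (c, c')" .
qed (auto simp: eigvec_mat_inv_def eigvec_mat_def)

lemma U_cay_adj_mat_eigvec_mat:
  "U_cay_adj_mat n (U_conn n) * eigvec_mat n = eigvec_mat n * eigval_mat n"
proof (rule eq_matI)
  fix p c assume "p < dim_row (eigvec_mat n * eigval_mat n)" "c < dim_col (eigvec_mat n * eigval_mat n)"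
  then have pc: "p < 6*n" "c < 6*n" by (simp_all add: eigvec_mat_def eigval_mat_def mat_diag_def)
  define t k m r where "t = c div 6" "k = c mod 6" "m = p div 6" "r = p mod 6"
  have tk: "m < n" "r < 6" "t < n" "k < 6" using pc unfolding t_k_m_r_def by auto
  have "(U_cay_adj_mat n (U_conn n) * eigvec_mat n) $$ (p, c)
      = (\<Sum>m'<n. \<Sum>r'<6. U_cay_adj_mat n (U_conn n) $$ (p, 6*m' + r') * eigvec_mat n $$ (6*m' + r', c))"
    using index_mult_mat_sum[OF eigvec_mat_carrier(4,1) pc] sum_blocks[of _ 6 n] by simp
  also have "\<dots> = (\<Sum>m'<n. \<Sum>r'<6. (if U_block_adj m r m' r' then 1 else 0)
      * (helmert t m' * local_vec (t = 0) k r'))"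
  proof (intro sum.cong refl)
    fix m' r' assume "m' \<in> {..<n}" "r' \<in> {..<6::nat}"
    then have "6*m' + r' < 6*n" "r' < 6" by auto
    then show "U_cay_adj_mat n (U_conn n) $$ (p, 6*m' + r') * eigvec_mat n $$ (6*m' + r', c)
        = (if U_block_adj m r m' r' then 1 else 0) * (helmert t m' * local_vec (t = 0) k r')"
      using U_cay_adj_mat_entry[OF pc(1)] pc by (simp add: eigvec_mat_def t_k_m_r_def)
  qed
  also have "\<dots> = of_int (local_eig n (t = 0) k) * (helmert t m * local_vec (t = 0) k r)"
    by (rule U_block_adj_eigen[OF tk])
  also have "\<dots> = (eigvec_mat n * eigval_mat n) $$ (p, c)"
  proof -
    have "eigvec_mat n * eigval_mat n
        = mat (6*n) (6*n) (\<lambda>(i, j). eigvec_mat n $$ (i, j) * of_int (eigval n j))"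
      unfolding eigval_mat_def by (rule mat_diag_mult_right[OF eigvec_mat_carrier(1)])
    then show ?thesis using pc by (simp add: eigvec_mat_def eigval_def t_k_m_r_def)
  qed
  finally show "(U_cay_adj_mat n (U_conn n) * eigvec_mat n) $$ (p, c) = (eigvec_mat n * eigval_mat n) $$ (p, c)" .
qed (auto simp: U_cay_adj_mat_def eigvec_mat_def eigval_mat_def mat_diag_def)

lemma sum_eigval:
  assumes "n > 0"
  shows "(\<Sum>c<6*n. {#eigval n c#}) = replicate_mset 2 (1 - 2 * int n) + replicate_mset (2*n-2) (-2)
            + replicate_mset (4*n-2) 1 + {# int n - 2 #} + {# 3 * int n - 2 #}"
proof -
  obtain N where N: "n = Suc N" using assms by (cases n) auto
  have repeat: "(\<Sum>m<N. M) = repeat_mset N M" for M :: "int multiset"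
    by (induction N) auto
  have "(\<Sum>c<6*n. {#eigval n c#}) = (\<Sum>m<n. \<Sum>r<6. {#local_eig n (m = 0) r#})"
    using sum_blocks[of "\<lambda>c. {#eigval n c#}" 6 n] by (simp add: eigval_def)
  also have "\<dots> = (\<Sum>r<6. {#local_eig n True r#}) + repeat_mset N (\<Sum>r<6. {#local_eig n False r#})"
    unfolding N sum.lessThan_Suc_shift by (simp add: repeat)
  also have "\<dots> = replicate_mset 2 (1 - 2 * int n) + replicate_mset (2*n-2) (-2)
            + replicate_mset (4*n-2) 1 + {# int n - 2 #} + {# 3 * int n - 2 #}"
    by (rule multiset_eqI) (simp add: sum_six local_eig_def N)
  finally show ?thesis .
qed

section \<open>Connectivity\<close>

lemma cay_connectedI:
  assumes "\<And>g. g \<in> G \<Longrightarrow> (\<lambda>x y. x \<in> G \<and> y \<in> G \<and> cay_adj mul S x y)\<^sup>*\<^sup>* g e"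
  shows "cay_connected mul G S"
proof -
  let ?R = "\<lambda>x y. x \<in> G \<and> y \<in> G \<and> cay_adj mul S x y"
  have "symp ?R" unfolding symp_def cay_adj_def by blast
  then have "symp ?R\<^sup>*\<^sup>*" by (rule symp_rtranclp)
  then show ?thesis
    unfolding cay_connected_def using assms by (meson rtranclp_trans sympD)
qed

lemma cay_connected_U_conn:
  assumes "n > 1"
  shows "cay_connected (U_mul n) (U_carrier n) (U_conn n)"
proof -
  define R where "R x y \<longleftrightarrow> x \<in> U_carrier n \<and> y \<in> U_carrier n \<and> cay_adj (U_mul n) (U_conn n) x y"
    for x y
  have edge: "R (i, j) (k, l)"
    if "i < 2*n" "j < 3" "k < 2*n" "l < 3" "U_conn_adj i j k l" for i j k l
    using that cay_adj_U_conn_iff[of i n k j l] by (simp add: R_def U_carrier_def)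
  have "2 < 2*n" using assms by simp
  have a_b_one: "R (1, 1) (0, 0)"
    using \<open>2 < 2*n\<close> by (intro edge) (auto simp: U_conn_adj_def)
  have a_even_one: "R\<^sup>*\<^sup>* (i, 0) (0, 0)" if "even i" "i \<noteq> 0" "i < 2*n" for i
  proof -
    have "R (i, 0) (1, 1)" using that \<open>2 < 2*n\<close> by (intro edge) (auto simp: U_conn_adj_def)
    then show ?thesis using a_b_one by (blast intro: converse_rtranclp_into_rtranclp)
  qed
  have b_one: "R\<^sup>*\<^sup>* (0, j) (0, 0)" if "j < 3" for j
  proof (cases "j = 0")
    case False
    have "R (0, j) (2, 0)" using that False \<open>2 < 2*n\<close> by (intro edge) (auto simp: U_conn_adj_def)
    moreover have "R\<^sup>*\<^sup>* (2, 0) (0, 0)" using \<open>2 < 2*n\<close> by (intro a_even_one) auto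
    ultimately show ?thesis by (rule converse_rtranclp_into_rtranclp)
  qed simp
  have to_one: "R\<^sup>*\<^sup>* (i, j) (0, 0)" if "i < 2*n" "j < 3" for i j
  proof (cases "even i")
    case True
    show ?thesis
    proof (cases "i = 0 \<or> j = 0")
      case True
      then show ?thesis using b_one a_even_one \<open>even i\<close> that by auto
    next
      case False
      then have "R (i, j) (0, 0)" using that \<open>even i\<close> \<open>2 < 2*n\<close> by (intro edge) (auto simp: U_conn_adj_def)
      then show ?thesis by simp
    qed
  next
    case False
    then have "R (i, j) (0, (j + 2) mod 3)" using that \<open>2 < 2*n\<close> by (intro edge) (auto simp: U_conn_adj_def)
    moreover have "R\<^sup>*\<^sup>* (0, (j + 2) mod 3) (0, 0)" by (intro b_one) simp
    ultimately show ?thesis by (rule converse_rtranclp_into_rtranclp)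
  qed
  have "R = (\<lambda>x y. x \<in> U_carrier n \<and> y \<in> U_carrier n \<and> cay_adj (U_mul n) (U_conn n) x y)"
    by (simp add: R_def fun_eq_iff)
  with to_one show ?thesis
    by (intro cay_connectedI[where e = "(0, 0)"]) (auto simp: U_carrier_def)
qed

theorem corollary4p5:
  fixes n :: nat
  assumes "n > 1"
  defines "S1 \<equiv> {U_mul n (U_pow n U_a (2*r)) U_b | r. 1 \<le> r \<and> r \<le> n - 1}
              \<union> {U_mul n (U_pow n U_a (2*r)) (U_pow n U_b 2) | r. 1 \<le> r \<and> r \<le> n - 1}"
  defines "S2 \<equiv> {U_mul n (U_pow n U_a (2*r+1)) U_b | r. r \<le> n - 1}"
  defines "S \<equiv> S1 \<union> S2"
  shows "cay_connected (U_mul n) (U_carrier n) S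
       \<and> integral_mat (U_cay_adj_mat n S)
       \<and> has_spectrum (U_cay_adj_mat n S)
           (replicate_mset 2 (1 - 2 * int n) + replicate_mset (2*n-2) (-2)
            + replicate_mset (4*n-2) 1 + {# int n - 2 #} + {# 3 * int n - 2 #})"
proof -
  have S: "S = U_conn n" using U_conn_eq[OF assms(1)] unfolding S_def S1_def S2_def by simp
  have "similar_mat (U_cay_adj_mat n S) (eigval_mat n)"
    unfolding S using eigvec_mat_inv_mult U_cay_adj_mat_eigvec_mat assms(1)
    by (intro similar_mat_of_eigenbasis[of _ "6*n" "eigvec_mat n" "eigvec_mat_inv n"]) auto
  moreover have "has_spectrum (eigval_mat n) (\<Sum>c<6*n. {#eigval n c#})"
    unfolding eigval_mat_def by (rule has_spectrum_mat_diag)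
  ultimately have spectrum: "has_spectrum (U_cay_adj_mat n S) (\<Sum>c<6*n. {#eigval n c#})"
    by (rule has_spectrum_similar)
  have "(\<Sum>c<6*n. {#eigval n c#}) = replicate_mset 2 (1 - 2 * int n)
      + replicate_mset (2*n-2) (-2) + replicate_mset (4*n-2) 1 + {# int n - 2 #} + {# 3 * int n - 2 #}"
    using assms(1) by (intro sum_eigval) simp
  moreover have "integral_mat (U_cay_adj_mat n S)"
    using spectrum by (rule integral_mat_of_has_spectrum[OF eigvec_mat_carrier(4)])
  ultimately show ?thesis
    using cay_connected_U_conn[OF assms(1)] spectrum unfolding S by simp
qed

end
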